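(* Let $N\ge1$, $m\ge2$, let $A\in\mathbb{R}^{m\times m}$ be the integrator matrix, $C\in\mathbb{R}^{1\times m}$, $K_5\in\mathbb{R}^{1\times m}$, and $K_6\in\mathbb{R}^{m\times1}$ such that every eigenvalue of $A+K_6C$ has modulus strictly less than $1$. Fix $e_0\in\mathbb{R}^{Nm}$ and set $\omega_d[k]=(I_N\otimes(K_5K_6C(A+K_6C)^k))e_0\in\mathbb{R}^N$. Consider $$\bar Z[k+1]=(I_N-S[k])\bar Z[k]+\omega_d[k],\qquad k=0,1,2,\dots,$$ with $\bar Z[k]=(\bar z_1[k],\dots,\bar z_N[k])^T\in\mathbb{R}^N$ and $S[k]$ defined from the switching graph $\mathcal{G}_{\sigma[k]}$ as in the context. If $\mathcal{G}_{\sigma[k]}$ is uniformly jointly quasi-strongly connected in the discrete-time sense, then for every $\bar Z[0]\in\mathbb{R}^N$ there exists $\bar z^*\in\mathbb{R}$ such that $\lim_{k\to\infty}\bar z_i[k]=\bar z^*$ for all $i=1,\dots,N$.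
   Context: $A$ has ones on the superdiagonal and zeros elsewhere; $\otimes$ is the Kronecker product. Graphs: nodes $v_1,\dots,v_N$; edge $e_{ij}$ from $v_j$ to $v_i$; no self-edges; a finite index set $\mathcal{S}$ of digraphs, graph $\mathcal{G}_q$ having fixed weights $\alpha^{ij}_q>0$ on its edges ($0$ otherwise), $\mathcal{N}_i(q)=\{j:e_{ij}\in\mathcal{G}_q\}$; $\sigma:\{0,1,2,\dots\}\to\mathcal{S}$ arbitrary. $S[k]\in\mathbb{R}^{N\times N}$: with $d_i[k]=\sum_{j\in\mathcal{N}_i(\sigma[k])}\alpha^{ij}_{\sigma[k]}$, the $(i,i)$ entry is $d_i[k]/(1+d_i[k])$ and the $(i,j)$ entry ($i\ne j$) is $-\alpha^{ij}_{\sigma[k]}/(1+d_i[k])$. A digraph is quasi-strongly connected if some node has a directed path to every other node. $\mathcal{G}_{\sigma[k]}$ is uniformly jointly quasi-strongly connected in the discrete-time sense if there is an integer $M>0$ such that for every $k\ge0$ the graph with edge set $\bigcup_{i=k}^{k+M}\mathcal{E}(\mathcal{G}_{\sigma[i]})$ is quasi-strongly connected. *)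

theory Defs
  imports "Jordan_Normal_Form.Matrix" "Jordan_Normal_Form.Char_Poly"
begin

definition kron :: "'a::times mat \<Rightarrow> 'a mat \<Rightarrow> 'a mat" where
  "kron P Q = mat (dim_row P * dim_row Q) (dim_col P * dim_col Q)
     (\<lambda>(i,j). P $$ (i div dim_row Q, j div dim_col Q) * Q $$ (i mod dim_row Q, j mod dim_col Q))"

definition integrator :: "nat \<Rightarrow> real mat" where
  "integrator m = mat m m (\<lambda>(i,j). if j = Suc i then 1 else 0)"

text \<open>Nodes are 0..N-1. alpha q i j is the weight of edge e_ij (from v_j to v_i) in graph q;
  an edge exists iff the weight is positive.\<close>
definition deg :: "('q \<Rightarrow> nat \<Rightarrow> nat \<Rightarrow> real) \<Rightarrow> nat \<Rightarrow> 'q \<Rightarrow> nat \<Rightarrow> real" where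
  "deg alpha N q i = (\<Sum>j\<in>{j. j < N \<and> j \<noteq> i \<and> alpha q i j > 0}. alpha q i j)"

definition Smat :: "('q \<Rightarrow> nat \<Rightarrow> nat \<Rightarrow> real) \<Rightarrow> nat \<Rightarrow> 'q \<Rightarrow> real mat" where
  "Smat alpha N q = mat N N (\<lambda>(i,j).
     if i = j then deg alpha N q i / (1 + deg alpha N q i)
     else - alpha q i j / (1 + deg alpha N q i))"

text \<open>Edge set (as pairs (from, to)) of the union graph over time steps k..k+M.\<close>
definition union_edges :: "('q \<Rightarrow> nat \<Rightarrow> nat \<Rightarrow> real) \<Rightarrow> nat \<Rightarrow> (nat \<Rightarrow> 'q) \<Rightarrow> nat \<Rightarrow> nat \<Rightarrow> (nat \<times> nat) set" where
  "union_edges alpha N sigma k M =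
     {(j, i). i < N \<and> j < N \<and> i \<noteq> j \<and> (\<exists>t\<in>{k..k+M}. alpha (sigma t) i j > 0)}"

definition quasi_strongly_connected :: "nat \<Rightarrow> (nat \<times> nat) set \<Rightarrow> bool" where
  "quasi_strongly_connected N E = (\<exists>r<N. \<forall>v<N. v \<noteq> r \<longrightarrow> (r, v) \<in> E\<^sup>+)"

definition UJQSC :: "('q \<Rightarrow> nat \<Rightarrow> nat \<Rightarrow> real) \<Rightarrow> nat \<Rightarrow> (nat \<Rightarrow> 'q) \<Rightarrow> bool" where
  "UJQSC alpha N sigma = (\<exists>M::nat. M > 0 \<and>
     (\<forall>k. quasi_strongly_connected N (union_edges alpha N sigma k M)))"

definition omega_d :: "nat \<Rightarrow> real mat \<Rightarrow> real mat \<Rightarrow> real mat \<Rightarrow> real mat \<Rightarrow> real vec \<Rightarrow> nat \<Rightarrow> real vec" where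
  "omega_d N A C K5 K6 e0 k =
     kron (1\<^sub>m N) (K5 * K6 * C * ((A + K6 * C) ^\<^sub>m k)) *\<^sub>v e0"

end

(*
  Since 1 - S[k] = (I + D)^{-1} (I + A_graph) with D the in-degree matrix, it is row-stochastic with
  positive diagonal, and as only finitely many graphs occur its positive entries are bounded
  below by some delta > 0. Since A + K6 C is Schur stable, omega_d[k] decays geometrically. So
  the system is a consensus iteration with a summable disturbance e.

  For such an iteration, max_i z_i[k] - sum_{t<k} e t is nonincreasing and min_i z_i[k] +
  sum_{t<k} e t nondecreasing, hence both converge. To see that the limits agree, split the
  nodes into those in the lower and those in the upper half of the current range. In each window
  of M + 1 steps the root of the jointly quasi-strongly connected graph lies in one of the two
  classes, and its margin from the opposite end of the range travels along a crossing edge, so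
  that class gains a node. After N windows one class contains every node, and the range has
  shrunk by the factor 1 - delta^(N (M + 1)) / 2 up to the accumulated disturbance.
*)

theory Submission
  imports Defs "Jordan_Normal_Form.Spectral_Radius"
begin

section \<open>Geometric decay of matrix powers\<close>

lemma smult_mat_mult_vec:
  assumes "A \<in> carrier_mat nr n" "v \<in> carrier_vec n"
  shows "(c \<cdot>\<^sub>m A) *\<^sub>v v = c \<cdot>\<^sub>v (A *\<^sub>v v)"
  by (rule eq_vecI) (use assms in \<open>auto simp: scalar_prod_def sum_distrib_left ac_simps\<close>)

lemma smult_mat_power:
  fixes A :: "'a :: comm_ring_1 mat"
  assumes "A \<in> carrier_mat n n"
  shows "(c \<cdot>\<^sub>m A) ^\<^sub>m k = c ^ k \<cdot>\<^sub>m A ^\<^sub>m k"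
proof (induction k)
  case 0
  show ?case using assms by (auto intro!: eq_matI)
next
  case (Suc k)
  have "(c \<cdot>\<^sub>m A) ^\<^sub>m Suc k = (c ^ k \<cdot>\<^sub>m A ^\<^sub>m k) * (c \<cdot>\<^sub>m A)"
    using Suc by simp
  also have "\<dots> = c ^ k \<cdot>\<^sub>m (A ^\<^sub>m k * (c \<cdot>\<^sub>m A))"
    by (rule mult_smult_assoc_mat) (use assms in auto)
  also have "\<dots> = c ^ k \<cdot>\<^sub>m (c \<cdot>\<^sub>m (A ^\<^sub>m k * A))"
    by (subst mult_smult_distrib) (use assms in auto)
  also have "\<dots> = c ^ Suc k \<cdot>\<^sub>m A ^\<^sub>m Suc k"
    by (auto intro!: eq_matI)
  finally show ?case .
qed

lemma eigenvalue_smult_mat: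
  fixes A :: "'a :: field mat"
  assumes A: "A \<in> carrier_mat n n" and "c \<noteq> 0" and "eigenvalue (c \<cdot>\<^sub>m A) ev"
  shows "eigenvalue A (ev / c)"
proof -
  obtain v where "v \<in> carrier_vec n" "v \<noteq> 0\<^sub>v n" and eig: "(c \<cdot>\<^sub>m A) *\<^sub>v v = ev \<cdot>\<^sub>v v"
    using assms(3) A unfolding eigenvalue_def eigenvector_def by auto
  have "A *\<^sub>v v = (ev / c) \<cdot>\<^sub>v v"
  proof (rule eq_vecI)
    fix i
    assume "i < dim_vec ((ev / c) \<cdot>\<^sub>v v)"
    then have "i < n"
      using \<open>v \<in> carrier_vec n\<close> by simp
    have "c * (A *\<^sub>v v) $ i = ev * v $ i"
      using arg_cong[OF eig, of "\<lambda>u. u $ i"] smult_mat_mult_vec[OF A \<open>v \<in> carrier_vec n\<close>]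
        \<open>i < n\<close> A \<open>v \<in> carrier_vec n\<close> by simp
    then show "(A *\<^sub>v v) $ i = ((ev / c) \<cdot>\<^sub>v v) $ i"
      using \<open>i < n\<close> \<open>c \<noteq> 0\<close> \<open>v \<in> carrier_vec n\<close> by (simp add: field_simps)
  qed (use A \<open>v \<in> carrier_vec n\<close> in auto)
  then show ?thesis
    unfolding eigenvalue_def eigenvector_def using A \<open>v \<in> carrier_vec n\<close> \<open>v \<noteq> 0\<^sub>v n\<close> by auto
qed

lemma matrix_powers_bounded:
  fixes A :: "complex mat"
  assumes A: "A \<in> carrier_mat n n" and spec: "\<And>ev. eigenvalue A ev \<Longrightarrow> cmod ev < 1"
  obtains c where "\<And>k. norm_bound (A ^\<^sub>m k) c"
proof (cases "n = 0")
  case True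
  then show ?thesis
    using that[of 0] A by (simp add: norm_bound_def)
next
  case False
  with spectral_radius_mem_max(1)[OF A] obtain z where "eigenvalue A z" "spectral_radius A = cmod z"
    unfolding spectrum_def by auto
  then have "spectral_radius A < 1"
    using spec by simp
  then show ?thesis
    using spectral_radius_jnf_norm_bound_less_1_upper_triangular[OF A] that by blast
qed

lemma norm_bound_power_rescale:
  fixes A :: "complex mat"
  assumes A: "A \<in> carrier_mat n n" and "0 < r"
    and bound: "norm_bound ((complex_of_real (1 / r) \<cdot>\<^sub>m A) ^\<^sub>m k) c"
  shows "norm_bound (A ^\<^sub>m k) (c * r ^ k)"
  unfolding norm_bound_def
proof (intro allI impI)
  fix i j
  assume "i < dim_row (A ^\<^sub>m k)" "j < dim_col (A ^\<^sub>m k)"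
  then have "i < n" "j < n"
    using pow_mat_dim_square[OF A] by simp_all
  have "(complex_of_real (1 / r) \<cdot>\<^sub>m A) ^\<^sub>m k = complex_of_real (1 / r) ^ k \<cdot>\<^sub>m A ^\<^sub>m k"
    by (rule smult_mat_power[OF A])
  then have "((complex_of_real (1 / r) \<cdot>\<^sub>m A) ^\<^sub>m k) $$ (i, j)
      = complex_of_real (1 / r) ^ k * (A ^\<^sub>m k) $$ (i, j)"
    using \<open>i < n\<close> \<open>j < n\<close> A by simp
  moreover have "cmod (((complex_of_real (1 / r) \<cdot>\<^sub>m A) ^\<^sub>m k) $$ (i, j)) \<le> c"
    using bound \<open>i < n\<close> \<open>j < n\<close> A unfolding norm_bound_def by simp
  ultimately have "(1 / r) ^ k * cmod ((A ^\<^sub>m k) $$ (i, j)) \<le> c"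
    using \<open>0 < r\<close> by (simp add: norm_mult norm_power norm_divide)
  then have "r ^ k * ((1 / r) ^ k * cmod ((A ^\<^sub>m k) $$ (i, j))) \<le> r ^ k * c"
    using \<open>0 < r\<close> by (simp add: mult_left_mono)
  moreover have "r ^ k * (1 / r) ^ k = 1"
    using \<open>0 < r\<close> by (simp flip: power_mult_distrib)
  ultimately show "cmod ((A ^\<^sub>m k) $$ (i, j)) \<le> c * r ^ k"
    by (simp add: mult.assoc[symmetric] mult.commute)
qed

text \<open>Take \<open>r\<close> strictly between the spectral radius and \<open>1\<close>: the powers of \<open>A / r\<close> are
  bounded.\<close>
lemma matrix_power_geometric_decay:
  fixes A :: "complex mat"
  assumes A: "A \<in> carrier_mat n n" and spec: "\<And>ev. eigenvalue A ev \<Longrightarrow> cmod ev < 1"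
  obtains c r where "0 < r" "r < 1" "\<And>k. norm_bound (A ^\<^sub>m k) (c * r ^ k)"
proof -
  define \<rho> where "\<rho> = Max (insert 0 (cmod ` spectrum A))"
  have fin: "finite (insert 0 (cmod ` spectrum A))"
    using card_finite_spectrum(1)[OF A] by simp
  have "\<rho> < 1"
    unfolding \<rho>_def using fin spec by (subst Max_less_iff) (auto simp: spectrum_def)
  have "0 \<le> \<rho>"
    unfolding \<rho>_def using fin by (intro Max_ge) auto
  define r where "r = (1 + \<rho>) / 2"
  have r: "0 < r" "r < 1" "\<rho> < r"
    using \<open>0 \<le> \<rho>\<close> \<open>\<rho> < 1\<close> unfolding r_def by auto
  have "cmod z < 1" if "eigenvalue (complex_of_real (1 / r) \<cdot>\<^sub>m A) z" for z
  proof -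
    have "eigenvalue A (z / complex_of_real (1 / r))"
      by (rule eigenvalue_smult_mat[OF A _ that]) (use r in simp)
    then have "cmod (z / complex_of_real (1 / r)) \<le> \<rho>"
      unfolding \<rho>_def using fin by (intro Max_ge) (auto simp: spectrum_def)
    then have "cmod z * r \<le> \<rho>"
      using r by (simp add: norm_divide norm_mult)
    then have "cmod z * r < 1 * r"
      using r by linarith
    then show "cmod z < 1"
      by (rule mult_less_cancel_right_pos[THEN iffD1, OF \<open>0 < r\<close>])
  qed
  moreover have "complex_of_real (1 / r) \<cdot>\<^sub>m A \<in> carrier_mat n n"
    using A by simp
  ultimately obtain c where "\<And>k. norm_bound ((complex_of_real (1 / r) \<cdot>\<^sub>m A) ^\<^sub>m k) c"
    using matrix_powers_bounded by blast
  then show ?thesis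
    using that[OF \<open>0 < r\<close> \<open>r < 1\<close>] norm_bound_power_rescale[OF A \<open>0 < r\<close>] by blast
qed

lemma real_matrix_power_geometric_decay:
  fixes B :: "real mat"
  assumes B: "B \<in> carrier_mat n n"
    and spec: "\<forall>ev. eigenvalue (map_mat complex_of_real B) ev \<longrightarrow> cmod ev < 1"
  obtains c r where "0 < r" "r < 1" "\<And>k i j. i < n \<Longrightarrow> j < n \<Longrightarrow> \<bar>(B ^\<^sub>m k) $$ (i, j)\<bar> \<le> c * r ^ k"
proof -
  have Bc: "map_mat complex_of_real B \<in> carrier_mat n n"
    using B by simp
  from spec have "\<And>ev. eigenvalue (map_mat complex_of_real B) ev \<Longrightarrow> cmod ev < 1"
    by blast
  then obtain c r where "0 < r" "r < 1"
    and bound: "\<And>k. norm_bound (map_mat complex_of_real B ^\<^sub>m k) (c * r ^ k)"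
    using matrix_power_geometric_decay[OF Bc] by blast
  have "\<bar>(B ^\<^sub>m k) $$ (i, j)\<bar> \<le> c * r ^ k" if "i < n" "j < n" for k i j
  proof -
    have "map_mat complex_of_real B ^\<^sub>m k = map_mat complex_of_real (B ^\<^sub>m k)"
      by (rule of_real_hom.mat_hom_pow[OF B, symmetric])
    then have "cmod ((map_mat complex_of_real B ^\<^sub>m k) $$ (i, j)) = \<bar>(B ^\<^sub>m k) $$ (i, j)\<bar>"
      using that B by simp
    moreover have "cmod ((map_mat complex_of_real B ^\<^sub>m k) $$ (i, j)) \<le> c * r ^ k"
      using bound[of k] that pow_mat_dim_square[OF Bc] unfolding norm_bound_def by simp
    ultimately show ?thesis
      by simp
  qed
  then show ?thesis
    by (rule that[OF \<open>0 < r\<close> \<open>r < 1\<close>])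
qed

section \<open>The disturbance\<close>

lemma kron_one_row_entry:
  fixes R :: "'a :: semiring_1 mat"
  assumes "R \<in> carrier_mat 1 m" "i < N" "l < N * m"
  shows "kron (1\<^sub>m N) R $$ (i, l) = (if i = l div m then R $$ (0, l mod m) else 0)"
proof -
  have "0 < m" "l div m < N"
    using assms(3) by (auto simp: less_mult_imp_div_less mult.commute intro: Nat.gr0I)
  then show ?thesis
    unfolding kron_def using assms by auto
qed

lemma kron_one_row_mult_vec_bound:
  fixes R :: "real mat"
  assumes R: "R \<in> carrier_mat 1 m" and v: "v \<in> carrier_vec (N * m)" and "i < N"
    and entries: "\<And>j. j < m \<Longrightarrow> \<bar>R $$ (0, j)\<bar> \<le> b"
  shows "\<bar>(kron (1\<^sub>m N) R *\<^sub>v v) $ i\<bar> \<le> b * (\<Sum>l<N * m. \<bar>v $ l\<bar>)"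
proof -
  have dims: "dim_row (kron (1\<^sub>m N) R) = N" "dim_col (kron (1\<^sub>m N) R) = N * m"
    using R unfolding kron_def by auto
  have entry: "\<bar>kron (1\<^sub>m N) R $$ (i, l)\<bar> \<le> b" if "l < N * m" for l
  proof -
    have "0 < m"
      using that by (auto intro: Nat.gr0I)
    then have "0 \<le> b"
      using entries[of 0] by linarith
    then show ?thesis
      using kron_one_row_entry[OF R \<open>i < N\<close> that] entries[of "l mod m"] \<open>0 < m\<close> by auto
  qed
  have "(kron (1\<^sub>m N) R *\<^sub>v v) $ i = (\<Sum>l<N * m. kron (1\<^sub>m N) R $$ (i, l) * v $ l)"
    using dims \<open>i < N\<close> v by (simp add: scalar_prod_def atLeast0LessThan)
  also have "\<bar>\<dots>\<bar> \<le> (\<Sum>l<N * m. \<bar>kron (1\<^sub>m N) R $$ (i, l) * v $ l\<bar>)"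
    by (rule sum_abs)
  also have "\<dots> \<le> (\<Sum>l<N * m. b * \<bar>v $ l\<bar>)"
    using entry by (intro sum_mono) (simp add: abs_mult mult_right_mono)
  finally show ?thesis
    by (simp add: sum_distrib_left)
qed

lemma omega_d_carrier:
  assumes "K5 \<in> carrier_mat 1 n"
  shows "omega_d N A C K5 K6 e0 k \<in> carrier_vec N"
  using assms unfolding omega_d_def kron_def carrier_vec_def by simp

lemma omega_d_geometric_decay:
  assumes A: "A \<in> carrier_mat m m" and C: "C \<in> carrier_mat 1 m"
    and K5: "K5 \<in> carrier_mat 1 m" and K6: "K6 \<in> carrier_mat m 1"
    and spec: "\<forall>ev. eigenvalue (map_mat complex_of_real (A + K6 * C)) ev \<longrightarrow> cmod ev < 1"
    and e0: "e0 \<in> carrier_vec (N * m)"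
  obtains c r where "0 < r" "r < 1" "\<And>k i. i < N \<Longrightarrow> \<bar>omega_d N A C K5 K6 e0 k $ i\<bar> \<le> c * r ^ k"
proof -
  define B where "B = A + K6 * C"
  define K where "K = K5 * K6 * C"
  have B: "B \<in> carrier_mat m m" and K: "K \<in> carrier_mat 1 m"
    unfolding B_def K_def using A C K5 K6 by (auto intro!: add_carrier_mat mult_carrier_mat)
  obtain c r where "0 < r" "r < 1"
    and power: "\<And>k a j. a < m \<Longrightarrow> j < m \<Longrightarrow> \<bar>(B ^\<^sub>m k) $$ (a, j)\<bar> \<le> c * r ^ k"
    by (rule real_matrix_power_geometric_decay[OF B spec[folded B_def]]) blast
  define \<kappa> where "\<kappa> = (\<Sum>a<m. \<bar>K $$ (0, a)\<bar>)"
  have row: "\<bar>(K * B ^\<^sub>m k) $$ (0, j)\<bar> \<le> \<kappa> * c * r ^ k" if "j < m" for k j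
  proof -
    have "(K * B ^\<^sub>m k) $$ (0, j) = (\<Sum>a<m. K $$ (0, a) * (B ^\<^sub>m k) $$ (a, j))"
      using K B that by (simp add: scalar_prod_def atLeast0LessThan)
    also have "\<bar>\<dots>\<bar> \<le> (\<Sum>a<m. \<bar>K $$ (0, a) * (B ^\<^sub>m k) $$ (a, j)\<bar>)"
      by (rule sum_abs)
    also have "\<dots> \<le> (\<Sum>a<m. \<bar>K $$ (0, a)\<bar> * (c * r ^ k))"
      using power that by (intro sum_mono) (simp add: abs_mult mult_left_mono)
    finally show ?thesis
      unfolding \<kappa>_def by (simp add: sum_distrib_right mult.assoc)
  qed
  define E where "E = (\<Sum>l<N * m. \<bar>e0 $ l\<bar>)"
  have "\<bar>omega_d N A C K5 K6 e0 k $ i\<bar> \<le> \<kappa> * c * E * r ^ k" if "i < N" for k i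
  proof -
    have "omega_d N A C K5 K6 e0 k = kron (1\<^sub>m N) (K * B ^\<^sub>m k) *\<^sub>v e0"
      unfolding omega_d_def K_def B_def ..
    moreover have "K * B ^\<^sub>m k \<in> carrier_mat 1 m"
      using K B by simp
    ultimately show ?thesis
      using kron_one_row_mult_vec_bound[OF _ e0 that row] unfolding E_def by (simp add: ac_simps)
  qed
  then show ?thesis
    by (rule that[OF \<open>0 < r\<close> \<open>r < 1\<close>])
qed

section \<open>Consensus under a summable disturbance\<close>

lemma union_edges_shift:
  "union_edges (\<lambda>t. P (k + t)) N id s M = union_edges P N id (k + s) M"
proof -
  have "(\<exists>t\<in>{k + s..k + s + M}. Q t) \<longleftrightarrow> (\<exists>t\<in>{s..s + M}. Q (k + t))" for Q
  proof
    assume "\<exists>t\<in>{k + s..k + s + M}. Q t"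
    then obtain t where "t \<in> {k + s..k + s + M}" "Q t" by blast
    then show "\<exists>t\<in>{s..s + M}. Q (k + t)" by (intro bexI[of _ "t - k"]) auto
  qed auto
  then show ?thesis unfolding union_edges_def by simp
qed

lemma trancl_crossing_edge:
  assumes "(r, v) \<in> E\<^sup>+" "r \<in> S" "v \<notin> S"
  obtains j i where "(j, i) \<in> E" "j \<in> S" "i \<notin> S"
  using assms by (induction rule: trancl_induct) auto

lemma convergent_if_increments_summable:
  fixes f e :: "nat \<Rightarrow> real"
  assumes "summable e" "\<And>t. 0 \<le> e t" and step: "\<And>t. f (Suc t) \<le> f t + e t"
    and lower: "\<And>t. c \<le> f t"
  shows "convergent f"
proof -
  define g where "g t = f t - sum e {..<t}" for t
  have "decseq g"
    unfolding decseq_Suc_iff g_def using step by (simp add: diff_le_eq)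
  moreover have "c - suminf e \<le> g t" for t
    using lower[of t] sum_le_suminf[OF \<open>summable e\<close>, of "{..<t}"] assms(2)
    unfolding g_def by simp
  ultimately obtain L where "g \<longlonglongrightarrow> L"
    using decseq_convergent by blast
  then have "(\<lambda>t. g t + sum e {..<t}) \<longlonglongrightarrow> L + suminf e"
    using summable_LIMSEQ[OF \<open>summable e\<close>] by (intro tendsto_add)
  then show ?thesis
    unfolding g_def convergent_def by auto
qed

locale consensus_weights =
  fixes N :: nat and P :: "nat \<Rightarrow> nat \<Rightarrow> nat \<Rightarrow> real" and \<delta> :: real and M :: nat
  assumes weights_nonneg: "\<And>t i j. i < N \<Longrightarrow> j < N \<Longrightarrow> 0 \<le> P t i j"
    and row_sum: "\<And>t i. i < N \<Longrightarrow> (\<Sum>j<N. P t i j) = 1"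
    and diag_ge: "\<And>t i. i < N \<Longrightarrow> \<delta> \<le> P t i i"
    and positive_weight_ge: "\<And>t i j. i < N \<Longrightarrow> j < N \<Longrightarrow> 0 < P t i j \<Longrightarrow> \<delta> \<le> P t i j"
    and delta_pos: "0 < \<delta>"
    and jointly_connected: "\<And>k. quasi_strongly_connected N (union_edges P N id k M)"
begin

lemma N_pos: "0 < N"
  using jointly_connected[of 0] unfolding quasi_strongly_connected_def by auto

lemma weights_shift: "consensus_weights N (\<lambda>t. P (k + t)) \<delta> M"
  by unfold_locales
    (use weights_nonneg row_sum diag_ge positive_weight_ge delta_pos jointly_connected
      in \<open>simp_all add: union_edges_shift\<close>)

end

locale perturbed_consensus = consensus_weights +
  fixes x w :: "nat \<Rightarrow> nat \<Rightarrow> real" and e :: "nat \<Rightarrow> real"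
  assumes recursion: "\<And>t i. i < N \<Longrightarrow> x (Suc t) i = (\<Sum>j<N. P t i j * x t j) + w t i"
    and disturbance_le: "\<And>t i. i < N \<Longrightarrow> \<bar>w t i\<bar> \<le> e t"
begin

lemma uminus: "perturbed_consensus N P \<delta> M (\<lambda>t i. - x t i) (\<lambda>t i. - w t i) e"
  by unfold_locales (use recursion disturbance_le in \<open>simp_all add: sum_negf\<close>)

lemma shift: "perturbed_consensus N (\<lambda>t. P (k + t)) \<delta> M (\<lambda>t. x (k + t)) (\<lambda>t. w (k + t)) (\<lambda>t. e (k + t))"
proof -
  interpret shifted: consensus_weights N "\<lambda>t. P (k + t)" \<delta> M
    by (rule weights_shift)
  show ?thesis by unfold_locales (use recursion disturbance_le in simp_all)
qed

lemma e_nonneg: "0 \<le> e t"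
  using disturbance_le[OF N_pos, of t] by linarith

lemma step_le:
  assumes upper: "\<forall>j<N. x t j \<le> U" and "j0 < N" and low: "x t j0 \<le> U - \<beta>" and "0 \<le> \<beta>"
    and i: "i < N" and weight: "\<delta> \<le> P t i j0"
  shows "x (Suc t) i \<le> U + e t - \<delta> * \<beta>"
proof -
  have "(\<Sum>j<N. P t i j * x t j) \<le> (\<Sum>j<N. P t i j * (U - (if j = j0 then \<beta> else 0)))"
    by (rule sum_mono, rule mult_left_mono) (use upper low weights_nonneg[OF i] in auto)
  also have "\<dots> = (\<Sum>j<N. P t i j * U - (if j = j0 then P t i j * \<beta> else 0))"
    by (rule sum.cong) (auto simp: right_diff_distrib)
  also have "\<dots> = U - P t i j0 * \<beta>"
    using row_sum[OF i] \<open>j0 < N\<close> by (simp add: sum_subtractf flip: sum_distrib_right)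
  also have "\<dots> \<le> U - \<delta> * \<beta>"
    using weight \<open>0 \<le> \<beta>\<close> by (simp add: mult_right_mono)
  finally show ?thesis
    using recursion[OF i, of t] disturbance_le[OF i, of t] by linarith
qed

lemma upper_bound_propagates:
  assumes "\<forall>i<N. x 0 i \<le> B" and "i < N"
  shows "x s i \<le> B + sum e {..<s}"
  using \<open>i < N\<close>
proof (induction s arbitrary: i)
  case (Suc s)
  have "x (Suc s) i \<le> (B + sum e {..<s}) + e s - \<delta> * 0"
    by (rule step_le[of s _ i]) (use Suc diag_ge in auto)
  then show ?case by simp
qed (use assms in auto)

lemma margin_persists:
  assumes init: "\<forall>i<N. x 0 i \<le> B" and i: "i < N"
    and margin: "x s i \<le> B + sum e {..<s} - \<beta>" and "0 \<le> \<beta>"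
  shows "x (s + d) i \<le> B + sum e {..<s + d} - \<delta> ^ d * \<beta>"
proof (induction d)
  case (Suc d)
  have "x (Suc (s + d)) i \<le> (B + sum e {..<s + d}) + e (s + d) - \<delta> * (\<delta> ^ d * \<beta>)"
    by (rule step_le[OF _ i Suc.IH _ i]) (use upper_bound_propagates[OF init] diag_ge i delta_pos \<open>0 \<le> \<beta>\<close> in auto)
  then show ?case by (simp add: algebra_simps)
qed (use margin in simp)

lemma margin_crosses_edge:
  assumes init: "\<forall>i<N. x 0 i \<le> B" and "i < N" "j < N"
    and margin: "x s j \<le> B + sum e {..<s} - \<beta>" and "0 \<le> \<beta>" and edge: "0 < P s i j"
  shows "x (Suc s) i \<le> B + sum e {..<Suc s} - \<delta> * \<beta>"
proof -
  have "x (Suc s) i \<le> (B + sum e {..<s}) + e s - \<delta> * \<beta>"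
    by (rule step_le[OF _ \<open>j < N\<close> margin \<open>0 \<le> \<beta>\<close> \<open>i < N\<close>])
      (use upper_bound_propagates[OF init] positive_weight_ge[OF \<open>i < N\<close> \<open>j < N\<close> edge] in auto)
  then show ?thesis by (simp add: algebra_simps)
qed

lemma margin_spreads_in_window:
  assumes init: "\<forall>i<N. x 0 i \<le> B" and S: "S \<subseteq> {..<N}"
    and margin: "\<forall>i\<in>S. x s i \<le> B + sum e {..<s} - \<beta>" and "0 \<le> \<beta>"
    and "v < N" "v \<notin> S" and "r \<in> S"
    and root: "\<forall>v<N. v \<noteq> r \<longrightarrow> (r, v) \<in> (union_edges P N id s M)\<^sup>+"
  obtains i' where "i' < N" "i' \<notin> S"
    "\<forall>i\<in>insert i' S. x (s + Suc M) i \<le> B + sum e {..<s + Suc M} - \<delta> ^ Suc M * \<beta>"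
proof -
  have "(r, v) \<in> (union_edges P N id s M)\<^sup>+"
    using root \<open>v < N\<close> \<open>v \<notin> S\<close> \<open>r \<in> S\<close> by metis
  then obtain j i where edge: "(j, i) \<in> union_edges P N id s M" and "j \<in> S" "i \<notin> S"
    using \<open>r \<in> S\<close> \<open>v \<notin> S\<close> by (rule trancl_crossing_edge)
  then obtain t where "i < N" "j < N" "t \<in> {s..s + M}" and active: "0 < P t i j"
    unfolding union_edges_def by auto
  define u where "u = t - s"
  have "u \<le> M" "t = s + u"
    using \<open>t \<in> {s..s + M}\<close> unfolding u_def by auto
  have "x (s + u) j \<le> B + sum e {..<s + u} - \<delta> ^ u * \<beta>"
    using margin_persists[OF init \<open>j < N\<close> _ \<open>0 \<le> \<beta>\<close>] margin \<open>j \<in> S\<close> by blast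
  then have "x (Suc (s + u)) i \<le> B + sum e {..<Suc (s + u)} - \<delta> * (\<delta> ^ u * \<beta>)"
    by (rule margin_crosses_edge[OF init \<open>i < N\<close> \<open>j < N\<close>])
      (use \<open>0 \<le> \<beta>\<close> delta_pos active \<open>t = s + u\<close> in auto)
  then have "x (Suc (s + u) + (M - u)) i
      \<le> B + sum e {..<Suc (s + u) + (M - u)} - \<delta> ^ (M - u) * (\<delta> * (\<delta> ^ u * \<beta>))"
    by (rule margin_persists[OF init \<open>i < N\<close>]) (use \<open>0 \<le> \<beta>\<close> delta_pos in auto)
  moreover have "Suc (s + u) + (M - u) = s + Suc M"
    using \<open>u \<le> M\<close> by simp
  moreover have "\<delta> ^ (M - u) * (\<delta> * (\<delta> ^ u * \<beta>)) = \<delta> ^ Suc M * \<beta>"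
    using \<open>u \<le> M\<close> by (simp flip: power_add mult.assoc)
  ultimately have "x (s + Suc M) i \<le> B + sum e {..<s + Suc M} - \<delta> ^ Suc M * \<beta>"
    by simp
  moreover have "\<forall>i\<in>S. x (s + Suc M) i \<le> B + sum e {..<s + Suc M} - \<delta> ^ Suc M * \<beta>"
    using margin_persists[OF init _ _ \<open>0 \<le> \<beta>\<close>] margin S by blast
  ultimately show ?thesis
    using that \<open>i < N\<close> \<open>i \<notin> S\<close> by blast
qed

lemma margin_set_persists:
  assumes "\<forall>i<N. x 0 i \<le> B" "S \<subseteq> {..<N}"
    and "\<forall>i\<in>S. x s i \<le> B + sum e {..<s} - \<beta>" "0 \<le> \<beta>"
  shows "\<forall>i\<in>S. x (s + d) i \<le> B + sum e {..<s + d} - \<delta> ^ d * \<beta>"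
  using assms margin_persists by blast

definition margin_classes :: "real \<Rightarrow> real \<Rightarrow> real \<Rightarrow> nat \<Rightarrow> nat set \<Rightarrow> nat set \<Rightarrow> bool" where
  "margin_classes b B \<beta> s L H \<longleftrightarrow> L \<union> H = {..<N} \<and>
     (\<forall>i\<in>L. x s i \<le> B + sum e {..<s} - \<beta>) \<and> (\<forall>i\<in>H. b - sum e {..<s} + \<beta> \<le> x s i)"

lemma margin_classes_persist:
  assumes init: "\<forall>i<N. b \<le> x 0 i \<and> x 0 i \<le> B"
    and classes: "margin_classes b B \<beta> s L H" and "0 \<le> \<beta>"
  shows "margin_classes b B (\<delta> ^ d * \<beta>) (s + d) L H"
proof -
  interpret neg: perturbed_consensus N P \<delta> M "\<lambda>t i. - x t i" "\<lambda>t i. - w t i" e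
    by (rule uminus)
  have init_low: "\<forall>i<N. x 0 i \<le> B" and init_high: "\<forall>i<N. - x 0 i \<le> - b"
    using init by auto
  have "L \<subseteq> {..<N}" "H \<subseteq> {..<N}" and low: "\<forall>i\<in>L. x s i \<le> B + sum e {..<s} - \<beta>"
    and high: "\<forall>i\<in>H. - x s i \<le> - b + sum e {..<s} - \<beta>"
    using classes unfolding margin_classes_def by auto
  note margin_set_persists[OF init_low \<open>L \<subseteq> {..<N}\<close> low \<open>0 \<le> \<beta>\<close>, of d]
  moreover note neg.margin_set_persists[OF init_high \<open>H \<subseteq> {..<N}\<close> high \<open>0 \<le> \<beta>\<close>, of d]
  ultimately show ?thesis
    using classes unfolding margin_classes_def by fastforce
qed

lemma margin_classes_grow_from_root:
  assumes init: "\<forall>i<N. b \<le> x 0 i \<and> x 0 i \<le> B"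
    and classes: "margin_classes b B \<beta> s L H" and "0 \<le> \<beta>" and "L \<noteq> {..<N}"
    and "r \<in> L" and root: "\<forall>v<N. v \<noteq> r \<longrightarrow> (r, v) \<in> (union_edges P N id s M)\<^sup>+"
  obtains i' where "i' \<notin> L" "margin_classes b B (\<delta> ^ Suc M * \<beta>) (s + Suc M) (insert i' L) H"
proof -
  have init_low: "\<forall>i<N. x 0 i \<le> B"
    using init by auto
  have "L \<subseteq> {..<N}" and low: "\<forall>i\<in>L. x s i \<le> B + sum e {..<s} - \<beta>"
    using classes unfolding margin_classes_def by auto
  then obtain v where "v < N" "v \<notin> L"
    using \<open>L \<noteq> {..<N}\<close> by blast
  obtain i' where "i' < N" "i' \<notin> L" and grown:
    "\<forall>i\<in>insert i' L. x (s + Suc M) i \<le> B + sum e {..<s + Suc M} - \<delta> ^ Suc M * \<beta>"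
    by (rule margin_spreads_in_window[OF init_low \<open>L \<subseteq> {..<N}\<close> low \<open>0 \<le> \<beta>\<close>
          \<open>v < N\<close> \<open>v \<notin> L\<close> \<open>r \<in> L\<close> root])
  have "margin_classes b B (\<delta> ^ Suc M * \<beta>) (s + Suc M) L H"
    by (rule margin_classes_persist[OF init classes \<open>0 \<le> \<beta>\<close>])
  then have "margin_classes b B (\<delta> ^ Suc M * \<beta>) (s + Suc M) (insert i' L) H"
    using grown \<open>i' < N\<close> unfolding margin_classes_def by auto
  with \<open>i' \<notin> L\<close> show ?thesis
    by (rule that)
qed

text \<open>The root of the window lies in \<open>L\<close> or in \<open>H\<close>; the second case is the first one for
  the trajectory \<open>- x\<close>, with the roles of \<open>L\<close> and \<open>H\<close> exchanged.\<close>
lemma margin_classes_grow: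
  assumes init: "\<forall>i<N. b \<le> x 0 i \<and> x 0 i \<le> B"
    and classes: "margin_classes b B \<beta> s L H" and "0 \<le> \<beta>"
    and "L \<noteq> {..<N}" "H \<noteq> {..<N}"
  obtains L' H' where "margin_classes b B (\<delta> ^ Suc M * \<beta>) (s + Suc M) L' H'"
    "card L + card H < card L' + card H'"
proof -
  interpret neg: perturbed_consensus N P \<delta> M "\<lambda>t i. - x t i" "\<lambda>t i. - w t i" e
    by (rule uminus)
  have swap: "neg.margin_classes (- B) (- b) \<gamma> t H' L' \<longleftrightarrow> margin_classes b B \<gamma> t L' H'"
    for \<gamma> t L' H'
    unfolding margin_classes_def neg.margin_classes_def by (auto simp: Un_commute)
  have cover: "L \<union> H = {..<N}"
    using classes unfolding margin_classes_def by simp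
  then have "finite L" "finite H"
    by (auto intro: finite_subset[of _ "{..<N}"])
  obtain r where "r < N" and root: "\<forall>v<N. v \<noteq> r \<longrightarrow> (r, v) \<in> (union_edges P N id s M)\<^sup>+"
    using jointly_connected[of s] unfolding quasi_strongly_connected_def by blast
  with cover consider "r \<in> L" | "r \<in> H"
    by blast
  then show ?thesis
  proof cases
    case 1
    obtain i' where "i' \<notin> L" "margin_classes b B (\<delta> ^ Suc M * \<beta>) (s + Suc M) (insert i' L) H"
      by (rule margin_classes_grow_from_root[OF init classes \<open>0 \<le> \<beta>\<close> \<open>L \<noteq> {..<N}\<close> 1 root])
    with \<open>finite L\<close> show ?thesis
      by (intro that[of "insert i' L" H]) simp_all
  next
    case 2
    have "\<forall>i<N. - B \<le> - x 0 i \<and> - x 0 i \<le> - b"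
      using init by auto
    then obtain i' where "i' \<notin> H"
      "neg.margin_classes (- B) (- b) (\<delta> ^ Suc M * \<beta>) (s + Suc M) (insert i' H) L"
      by (rule neg.margin_classes_grow_from_root[OF _ _ \<open>0 \<le> \<beta>\<close> \<open>H \<noteq> {..<N}\<close> 2 root])
        (use classes swap in simp)
    with \<open>finite H\<close> show ?thesis
      by (intro that[of L "insert i' H"]) (simp_all add: swap)
  qed
qed

lemma margin_classes_initial:
  assumes init: "\<forall>i<N. b \<le> x 0 i \<and> x 0 i \<le> B"
  obtains L H where "margin_classes b B ((B - b) / 2) 0 L H" "N \<le> card L + card H"
proof
  define L where "L = {i. i < N \<and> x 0 i \<le> (B + b) / 2}"
  define H where "H = {i. i < N \<and> (B + b) / 2 \<le> x 0 i}"
  have "L \<union> H = {..<N}"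
    unfolding L_def H_def by auto
  then show "N \<le> card L + card H"
    using card_Un_le[of L H] by simp
  have "\<forall>i\<in>L. x 0 i \<le> B - (B - b) / 2" "\<forall>i\<in>H. b + (B - b) / 2 \<le> x 0 i"
    unfolding L_def H_def by (auto simp: field_simps)
  with \<open>L \<union> H = {..<N}\<close> show "margin_classes b B ((B - b) / 2) 0 L H"
    unfolding margin_classes_def by simp
qed

lemma margin_classes_after_windows:
  assumes init: "\<forall>i<N. b \<le> x 0 i \<and> x 0 i \<le> B" and "b \<le> B"
  shows "\<exists>L H. margin_classes b B (\<delta> ^ (n * Suc M) * ((B - b) / 2)) (n * Suc M) L H \<and>
    (L = {..<N} \<or> H = {..<N} \<or> N + n \<le> card L + card H)"
proof (induction n)
  case 0
  obtain L H where "margin_classes b B ((B - b) / 2) 0 L H" "N \<le> card L + card H"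
    by (rule margin_classes_initial[OF init])
  then show ?case
    by (intro exI[of _ L] exI[of _ H]) simp
next
  case (Suc n)
  define \<beta> where "\<beta> = \<delta> ^ (n * Suc M) * ((B - b) / 2)"
  have "0 \<le> \<beta>"
    unfolding \<beta>_def using delta_pos \<open>b \<le> B\<close> by simp
  have time: "Suc n * Suc M = n * Suc M + Suc M"
    and margin: "\<delta> ^ (Suc n * Suc M) * ((B - b) / 2) = \<delta> ^ Suc M * \<beta>"
    unfolding \<beta>_def by (simp_all add: power_add)
  from Suc.IH obtain L H where classes: "margin_classes b B \<beta> (n * Suc M) L H"
    and card: "L = {..<N} \<or> H = {..<N} \<or> N + n \<le> card L + card H"
    unfolding \<beta>_def by auto
  show ?case
    unfolding margin
  proof (cases "L = {..<N} \<or> H = {..<N}")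
    case True
    have "margin_classes b B (\<delta> ^ Suc M * \<beta>) (Suc n * Suc M) L H"
      using margin_classes_persist[OF init classes \<open>0 \<le> \<beta>\<close>, of "Suc M"] unfolding time .
    with True show "\<exists>L H. margin_classes b B (\<delta> ^ Suc M * \<beta>) (Suc n * Suc M) L H \<and>
      (L = {..<N} \<or> H = {..<N} \<or> N + Suc n \<le> card L + card H)"
      by blast
  next
    case False
    then obtain L' H' where "margin_classes b B (\<delta> ^ Suc M * \<beta>) (Suc n * Suc M) L' H'"
      and "card L + card H < card L' + card H'"
      using margin_classes_grow[OF init classes \<open>0 \<le> \<beta>\<close>] unfolding time by metis
    moreover have "N + Suc n \<le> card L' + card H'"
      using False card \<open>card L + card H < card L' + card H'\<close> by linarith
    ultimately show "\<exists>L H. margin_classes b B (\<delta> ^ Suc M * \<beta>) (Suc n * Suc M) L H \<and>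
      (L = {..<N} \<or> H = {..<N} \<or> N + Suc n \<le> card L + card H)"
      by (intro exI[of _ L'] exI[of _ H']) simp
  qed
qed

lemma window_contraction:
  assumes init: "\<forall>i<N. b \<le> x 0 i \<and> x 0 i \<le> B" and "b \<le> B"
  shows "(\<forall>i<N. x (N * Suc M) i \<le> B + sum e {..<N * Suc M} - \<delta> ^ (N * Suc M) * ((B - b) / 2))
    \<or> (\<forall>i<N. b - sum e {..<N * Suc M} + \<delta> ^ (N * Suc M) * ((B - b) / 2) \<le> x (N * Suc M) i)"
proof -
  obtain L H where classes: "margin_classes b B (\<delta> ^ (N * Suc M) * ((B - b) / 2)) (N * Suc M) L H"
    and card: "L = {..<N} \<or> H = {..<N} \<or> N + N \<le> card L + card H"
    using margin_classes_after_windows[OF init \<open>b \<le> B\<close>, where n = N] by blast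
  have "L \<subseteq> {..<N}" "H \<subseteq> {..<N}"
    using classes unfolding margin_classes_def by auto
  have "L = {..<N} \<or> H = {..<N}"
  proof (cases "N + N \<le> card L + card H")
    case True
    have "card L \<le> N" "card H \<le> N"
      using card_mono[OF _ \<open>L \<subseteq> {..<N}\<close>] card_mono[OF _ \<open>H \<subseteq> {..<N}\<close>] by simp_all
    with True have "card L = card {..<N}"
      by simp
    then show ?thesis
      using card_subset_eq[OF _ \<open>L \<subseteq> {..<N}\<close>] by simp
  qed (use card in blast)
  then show ?thesis
    using classes unfolding margin_classes_def by auto
qed

definition xmax :: "nat \<Rightarrow> real" where
  "xmax t = Max ((\<lambda>i. x t i) ` {..<N})"

definition xmin :: "nat \<Rightarrow> real" where
  "xmin t = Min ((\<lambda>i. x t i) ` {..<N})"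

lemma x_le_xmax: "i < N \<Longrightarrow> x t i \<le> xmax t"
  unfolding xmax_def by (rule Max_ge) auto

lemma xmin_le_x: "i < N \<Longrightarrow> xmin t \<le> x t i"
  unfolding xmin_def by (rule Min_le) auto

lemma xmax_least: "(\<And>i. i < N \<Longrightarrow> x t i \<le> c) \<Longrightarrow> xmax t \<le> c"
  unfolding xmax_def using N_pos by (intro Max.boundedI) auto

lemma xmin_greatest: "(\<And>i. i < N \<Longrightarrow> c \<le> x t i) \<Longrightarrow> c \<le> xmin t"
  unfolding xmin_def using N_pos by (intro Min.boundedI) auto

lemma xmin_le_xmax: "xmin t \<le> xmax t"
  using xmin_le_x[OF N_pos] x_le_xmax[OF N_pos] by (rule order_trans)

lemma range_step:
  shows "xmax (Suc t) \<le> xmax t + e t" and "xmin t - e t \<le> xmin (Suc t)"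
proof -
  interpret neg: perturbed_consensus N P \<delta> M "\<lambda>t i. - x t i" "\<lambda>t i. - w t i" e
    by (rule uminus)
  show "xmax (Suc t) \<le> xmax t + e t"
    using step_le[of t "xmax t" _ 0] x_le_xmax diag_ge by (intro xmax_least) fastforce
  show "xmin t - e t \<le> xmin (Suc t)"
    using neg.step_le[of t "- xmin t" _ 0] xmin_le_x diag_ge by (intro xmin_greatest) fastforce
qed

lemma xmax_drift: "xmax t \<le> xmax 0 + sum e {..<t}"
proof (induction t)
  case (Suc t)
  then show ?case using range_step(1)[of t] by simp
qed simp

lemma xmin_drift: "xmin 0 - sum e {..<t} \<le> xmin t"
proof (induction t)
  case (Suc t)
  then show ?case using range_step(2)[of t] by simp
qed simp

lemma range_contraction:
  "xmax (N * Suc M) - xmin (N * Suc M)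
     \<le> (1 - \<delta> ^ (N * Suc M) / 2) * (xmax 0 - xmin 0) + 2 * sum e {..<N * Suc M}"
proof -
  have init: "\<forall>i<N. xmin 0 \<le> x 0 i \<and> x 0 i \<le> xmax 0"
    using xmin_le_x x_le_xmax by blast
  from window_contraction[OF init xmin_le_xmax] show ?thesis
  proof
    assume "\<forall>i<N. x (N * Suc M) i
      \<le> xmax 0 + sum e {..<N * Suc M} - \<delta> ^ (N * Suc M) * ((xmax 0 - xmin 0) / 2)"
    then have "xmax (N * Suc M)
      \<le> xmax 0 + sum e {..<N * Suc M} - \<delta> ^ (N * Suc M) * ((xmax 0 - xmin 0) / 2)"
      by (intro xmax_least) auto
    with xmin_drift[of "N * Suc M"] show ?thesis
      by (simp add: algebra_simps)
  next
    assume "\<forall>i<N. xmin 0 - sum e {..<N * Suc M} + \<delta> ^ (N * Suc M) * ((xmax 0 - xmin 0) / 2)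
      \<le> x (N * Suc M) i"
    then have "xmin 0 - sum e {..<N * Suc M} + \<delta> ^ (N * Suc M) * ((xmax 0 - xmin 0) / 2)
      \<le> xmin (N * Suc M)"
      by (intro xmin_greatest) auto
    with xmax_drift[of "N * Suc M"] show ?thesis
      by (simp add: algebra_simps)
  qed
qed

lemma range_contraction_from:
  "xmax (k + N * Suc M) - xmin (k + N * Suc M)
     \<le> (1 - \<delta> ^ (N * Suc M) / 2) * (xmax k - xmin k) + 2 * (\<Sum>j<N * Suc M. e (k + j))"
proof -
  interpret shifted: perturbed_consensus N "\<lambda>t. P (k + t)" \<delta> M "\<lambda>t. x (k + t)"
    "\<lambda>t. w (k + t)" "\<lambda>t. e (k + t)"
    by (rule shift)
  have "shifted.xmax t = xmax (k + t)" "shifted.xmin t = xmin (k + t)" for t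
    unfolding shifted.xmax_def shifted.xmin_def xmax_def xmin_def by simp_all
  with shifted.range_contraction show ?thesis
    by simp
qed

lemma range_limits_coincide:
  assumes "summable e" and max: "xmax \<longlonglongrightarrow> a" and min: "xmin \<longlonglongrightarrow> b"
  shows "a = b"
proof -
  define T where "T = N * Suc M"
  define \<gamma> where "\<gamma> = \<delta> ^ T / 2"
  have "0 < \<gamma>"
    unfolding \<gamma>_def using delta_pos by simp
  have "(\<lambda>k. e (k + j)) \<longlonglongrightarrow> 0" for j
    using LIMSEQ_ignore_initial_segment[OF summable_LIMSEQ_zero[OF \<open>summable e\<close>]] .
  then have "(\<lambda>k. \<Sum>j<T. e (k + j)) \<longlonglongrightarrow> (\<Sum>j<T. 0)"
    by (intro tendsto_sum) (simp add: add.commute)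
  then have "(\<lambda>k. (1 - \<gamma>) * (xmax k - xmin k) + 2 * (\<Sum>j<T. e (k + j)))
      \<longlonglongrightarrow> (1 - \<gamma>) * (a - b) + 2 * 0"
    by (intro tendsto_intros max min) simp
  moreover have "(\<lambda>k. xmax (k + T) - xmin (k + T)) \<longlonglongrightarrow> a - b"
    by (intro tendsto_diff LIMSEQ_ignore_initial_segment max min)
  ultimately have "a - b \<le> (1 - \<gamma>) * (a - b) + 2 * 0"
    using range_contraction_from unfolding T_def \<gamma>_def
    by (intro LIMSEQ_le) (auto simp: add.commute)
  then have "a \<le> b"
    using \<open>0 < \<gamma>\<close> by (simp add: algebra_simps mult_le_0_iff)
  moreover have "b \<le> a"
    using LIMSEQ_le[OF min max] xmin_le_xmax by blast
  ultimately show ?thesis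
    by simp
qed

theorem consensus:
  assumes "summable e"
  shows "\<exists>z. \<forall>i<N. (\<lambda>t. x t i) \<longlonglongrightarrow> z"
proof -
  have partial: "sum e {..<t} \<le> suminf e" for t
    by (rule sum_le_suminf) (use \<open>summable e\<close> e_nonneg in auto)
  have "convergent xmax"
  proof (rule convergent_if_increments_summable[OF \<open>summable e\<close> e_nonneg range_step(1)])
    show "xmin 0 - suminf e \<le> xmax t" for t
      using xmin_drift[of t] xmin_le_xmax[of t] partial[of t] by linarith
  qed
  then obtain a where max: "xmax \<longlonglongrightarrow> a"
    unfolding convergent_def by blast
  have "convergent (\<lambda>t. - xmin t)"
  proof (rule convergent_if_increments_summable[OF \<open>summable e\<close> e_nonneg])
    show "- xmin (Suc t) \<le> - xmin t + e t" for t
      using range_step(2)[of t] by linarith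
    show "- (xmax 0 + suminf e) \<le> - xmin t" for t
      using xmax_drift[of t] xmin_le_xmax[of t] partial[of t] by linarith
  qed
  then obtain b where "(\<lambda>t. - xmin t) \<longlonglongrightarrow> b"
    unfolding convergent_def by blast
  then have min: "xmin \<longlonglongrightarrow> - b"
    using tendsto_minus by fastforce
  have "a = - b"
    using range_limits_coincide[OF \<open>summable e\<close> max min] .
  then have "(\<lambda>t. x t i) \<longlonglongrightarrow> a" if "i < N" for i
    using tendsto_sandwich[of xmin "\<lambda>t. x t i" sequentially xmax a] min max xmin_le_x x_le_xmax
      \<open>i < N\<close> by auto
  then show ?thesis
    by blast
qed

end

section \<open>The weights of the switching graph\<close>

lemma finite_positive_lower_bound:
  fixes A :: "real set"
  assumes "finite A"
  obtains \<delta> where "0 < \<delta>" "\<And>a. a \<in> A \<Longrightarrow> 0 < a \<Longrightarrow> \<delta> \<le> a"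
proof
  show "0 < Min (insert 1 {a \<in> A. 0 < a})"
    using assms by (subst Min_gr_iff) auto
  show "Min (insert 1 {a \<in> A. 0 < a}) \<le> a" if "a \<in> A" "0 < a" for a
    using assms that by (intro Min_le) auto
qed

lemma deg_nonneg: "0 \<le> deg alpha N q i"
  unfolding deg_def by (rule sum_nonneg) auto

lemma deg_eq_sum:
  assumes "\<And>j. 0 \<le> alpha q i j"
  shows "deg alpha N q i = (\<Sum>j\<in>{..<N} - {i}. alpha q i j)"
  unfolding deg_def by (rule sum.mono_neutral_left) (use assms in \<open>auto simp: order.order_iff_strict\<close>)

lemma one_minus_Smat_entry:
  assumes "i < N" "j < N"
  shows "(1\<^sub>m N - Smat alpha N q) $$ (i, j) = (if i = j then 1 else alpha q i j) / (1 + deg alpha N q i)"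
proof -
  have "1 - deg alpha N q k / (1 + deg alpha N q k) = 1 / (1 + deg alpha N q k)" for k
    using deg_nonneg[of alpha N q k] by (simp add: field_simps)
  then show ?thesis
    unfolding Smat_def using assms by simp
qed

lemma one_minus_Smat_row_sum:
  assumes "i < N" "\<And>j. 0 \<le> alpha q i j"
  shows "(\<Sum>j<N. (1\<^sub>m N - Smat alpha N q) $$ (i, j)) = 1"
proof -
  have "(\<Sum>j<N. (1\<^sub>m N - Smat alpha N q) $$ (i, j))
      = (1 + (\<Sum>j\<in>{..<N} - {i}. alpha q i j)) / (1 + deg alpha N q i)"
    using assms(1) by (simp add: one_minus_Smat_entry sum.remove sum_divide_distrib add_divide_distrib)
  also have "\<dots> = 1"
    using deg_eq_sum[where alpha = alpha and q = q and i = i and N = N, OF assms(2)] deg_nonneg[of alpha N q i] by simp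
  finally show ?thesis .
qed

lemma switching_consensus_weights:
  assumes "finite Sidx" and nonneg: "\<forall>q\<in>Sidx. \<forall>i j. 0 \<le> alpha q i j"
    and "\<forall>k. sigma k \<in> Sidx" and "UJQSC alpha N sigma"
  obtains \<delta> M where "consensus_weights N (\<lambda>t i j. (1\<^sub>m N - Smat alpha N (sigma t)) $$ (i, j)) \<delta> M"
proof -
  define W where "W t i j = (1\<^sub>m N - Smat alpha N (sigma t)) $$ (i, j)" for t i j
  have alpha: "0 \<le> alpha (sigma t) i j" for t i j
    using assms(3) nonneg by blast
  have entry: "W t i j = (if i = j then 1 else alpha (sigma t) i j) / (1 + deg alpha N (sigma t) i)"
    if "i < N" "j < N" for t i j
    unfolding W_def using one_minus_Smat_entry[OF that] .
  have denom: "0 < 1 + deg alpha N (sigma t) i" for t i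
    using deg_nonneg[of alpha N "sigma t" i] by linarith
  define F where "F = (\<lambda>(q, i, j). (1\<^sub>m N - Smat alpha N q) $$ (i, j)) ` (Sidx \<times> {..<N} \<times> {..<N})"
  have "finite F"
    unfolding F_def using \<open>finite Sidx\<close> by simp
  then obtain \<delta> where "0 < \<delta>" and \<delta>: "\<And>a. a \<in> F \<Longrightarrow> 0 < a \<Longrightarrow> \<delta> \<le> a"
    by (rule finite_positive_lower_bound) blast
  have W_ge: "\<delta> \<le> W t i j" if "i < N" "j < N" "0 < W t i j" for t i j
    using \<delta> that assms(3) unfolding W_def F_def by (force intro: image_eqI[of _ _ "(sigma t, i, j)"])
  have positive: "0 < W t i j \<longleftrightarrow> 0 < alpha (sigma t) i j" if "i < N" "j < N" "i \<noteq> j" for t i j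
    using entry[OF that(1,2)] denom[of t i] that(3) by (simp add: zero_less_divide_iff)
  obtain M where "0 < M" and connected: "\<And>k. quasi_strongly_connected N (union_edges alpha N sigma k M)"
    using \<open>UJQSC alpha N sigma\<close> unfolding UJQSC_def by blast
  have "union_edges W N id k M = union_edges alpha N sigma k M" for k
    unfolding union_edges_def using positive by auto
  moreover have "0 \<le> W t i j" if "i < N" "j < N" for t i j
    using entry[OF that] alpha[of t i j] denom[of t i] by simp
  moreover have "(\<Sum>j<N. W t i j) = 1" if "i < N" for t i
    unfolding W_def by (rule one_minus_Smat_row_sum[where alpha = alpha and q = "sigma t", OF that alpha])
  moreover have "\<delta> \<le> W t i i" if "i < N" for t i
    using W_ge[OF that that] entry[OF that that] denom[of t i] by simp
  ultimately have "consensus_weights N W \<delta> M"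
    using W_ge \<open>0 < \<delta>\<close> connected by unfold_locales simp_all
  then show ?thesis
    using that unfolding W_def by blast
qed

lemma affine_iteration_coordinates:
  assumes "Z 0 \<in> carrier_vec N" "\<And>k. A k \<in> carrier_mat N N" "\<And>k. b k \<in> carrier_vec N"
    and "\<forall>k. Z (Suc k) = A k *\<^sub>v Z k + b k" and "i < N"
  shows "Z (Suc k) $ i = (\<Sum>j<N. A k $$ (i, j) * Z k $ j) + b k $ i"
proof -
  have "Z k \<in> carrier_vec N"
  proof (induction k)
    case (Suc k)
    then show ?case
      using assms(2-4) by (metis add_carrier_vec mult_mat_vec_carrier)
  qed (rule assms(1))
  moreover have "A k \<in> carrier_mat N N" "b k \<in> carrier_vec N"
    using assms(2,3) .
  ultimately show ?thesis
    using assms(4,5) by (simp add: scalar_prod_def atLeast0LessThan)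
qed

theorem lemma3:
  fixes N m :: nat
    and C K5 K6 :: "real mat"
    and e0 :: "real vec"
    and Sidx :: "'q set"
    and alpha :: "'q \<Rightarrow> nat \<Rightarrow> nat \<Rightarrow> real"
    and sigma :: "nat \<Rightarrow> 'q"
    and Z :: "nat \<Rightarrow> real vec"
  assumes "N \<ge> 1" and "m \<ge> 2"
    and "C \<in> carrier_mat 1 m" and "K5 \<in> carrier_mat 1 m" and "K6 \<in> carrier_mat m 1"
    and "\<forall>ev. eigenvalue (map_mat complex_of_real (integrator m + K6 * C)) ev \<longrightarrow> cmod ev < 1"
    and "e0 \<in> carrier_vec (N * m)"
    and "finite Sidx"
    and "\<forall>q\<in>Sidx. \<forall>i j. alpha q i j \<ge> 0"
    and "\<forall>q\<in>Sidx. \<forall>i. alpha q i i = 0"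
    and "\<forall>k. sigma k \<in> Sidx"
    and "UJQSC alpha N sigma"
    and "Z 0 \<in> carrier_vec N"
    and "\<forall>k. Z (Suc k) = (1\<^sub>m N - Smat alpha N (sigma k)) *\<^sub>v Z k
                       + omega_d N (integrator m) C K5 K6 e0 k"
  shows "\<exists>zs::real. \<forall>i<N. (\<lambda>k. Z k $ i) \<longlonglongrightarrow> zs"
proof -
  let ?\<omega> = "omega_d N (integrator m) C K5 K6 e0"
  have "integrator m \<in> carrier_mat m m"
    unfolding integrator_def by simp
  then obtain c r where "0 < r" "r < 1" and decay: "\<And>k i. i < N \<Longrightarrow> \<bar>?\<omega> k $ i\<bar> \<le> c * r ^ k"
    by (rule omega_d_geometric_decay[OF _ assms(3-7)]) blast
  obtain \<delta> M where weights: "consensus_weights N (\<lambda>t i j. (1\<^sub>m N - Smat alpha N (sigma t)) $$ (i, j)) \<delta> M"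
    by (rule switching_consensus_weights[OF assms(8,9,11,12)]) blast
  have "1\<^sub>m N - Smat alpha N q \<in> carrier_mat N N" for q
    unfolding Smat_def by (rule minus_carrier_mat) simp
  then have recursion: "Z (Suc t) $ i
      = (\<Sum>j<N. (1\<^sub>m N - Smat alpha N (sigma t)) $$ (i, j) * Z t $ j) + ?\<omega> t $ i"
    if "i < N" for t i
    by (rule affine_iteration_coordinates[OF assms(13) _ omega_d_carrier[OF assms(4)] assms(14) that])
  interpret perturbed_consensus N "\<lambda>t i j. (1\<^sub>m N - Smat alpha N (sigma t)) $$ (i, j)" \<delta> M
    "\<lambda>t i. Z t $ i" "\<lambda>t i. ?\<omega> t $ i" "\<lambda>t. c * r ^ t"
    by (intro perturbed_consensus.intro perturbed_consensus_axioms.intro weights recursion decay)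
  have "summable (\<lambda>t. c * r ^ t)"
    using \<open>0 < r\<close> \<open>r < 1\<close> by (intro summable_mult summable_geometric) simp
  then show ?thesis
    by (rule consensus)
qed

end
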